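(* Let $\sigma\ge0$, $\gamma>0$, $V=\sqrt{1+\sigma}$, let $(n^\varepsilon,u^\varepsilon,\phi^\varepsilon)$ be the solitary wave solution and $\widetilde N_\varepsilon(\xi)=\frac{n^\varepsilon(\xi)-1}{\varepsilon}$. There exist positive constants $\varepsilon_0$ and $\delta_1$ such that for each $0<\delta<\delta_1$ there exists $\xi_\delta>0$ with \[ 0<\widetilde N_\varepsilon(\xi)\le\delta\qquad\text{for all }\xi\ge\xi_\delta\text{ and all }0<\varepsilon<\varepsilon_0. \] Here $\delta_1,\delta,\xi_\delta$ are independent of $\varepsilon$ and $\xi$.
   Context: For $\varepsilon>0$, consider the system in $\xi\in\mathbb{R}$: $-(V+\gamma\varepsilon)n'+(nu)'=0$, $-(V+\gamma\varepsilon)u'+uu'+\sigma n'/n=-\phi'$, $\varepsilon\phi''=e^\phi-n$, with $n\to1,u\to0,\phi\to0$ as $|\xi|\to\infty$. With $V=\sqrt{1+\sigma}$, for all sufficiently small $\varepsilon>0$ it has a non-trivial smooth solution unique up to translation; the "solitary wave solution" $(n^\varepsilon,u^\varepsilon,\phi^\varepsilon)$ is the translate that is even in $\xi$ and has all components strictly decreasing on $(0,\infty)$. *)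

theory Defs
  imports "HOL-Analysis.Analysis"
begin

definition smooth_real :: "(real \<Rightarrow> real) \<Rightarrow> bool" where
  "smooth_real f \<longleftrightarrow> (\<forall>k x. ((deriv ^^ k) f) differentiable (at x))"

text \<open>Positivity of n is required for the term sigma n'/n to make sense.\<close>
definition tw_solution ::
  "real \<Rightarrow> real \<Rightarrow> real \<Rightarrow> (real \<Rightarrow> real) \<Rightarrow> (real \<Rightarrow> real) \<Rightarrow> (real \<Rightarrow> real) \<Rightarrow> bool" where
  "tw_solution \<sigma> \<gamma> \<epsilon> n u \<phi> \<longleftrightarrow>
     (let V = sqrt (1 + \<sigma>) in
       smooth_real n \<and> smooth_real u \<and> smooth_real \<phi> \<and>
       (\<forall>x. n x > 0) \<and>
       (\<forall>x. - (V + \<gamma> * \<epsilon>) * deriv n x + deriv (\<lambda>y. n y * u y) x = 0) \<and>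
       (\<forall>x. - (V + \<gamma> * \<epsilon>) * deriv u x + u x * deriv u x + \<sigma> * deriv n x / n x
              = - deriv \<phi> x) \<and>
       (\<forall>x. \<epsilon> * deriv (deriv \<phi>) x = exp (\<phi> x) - n x) \<and>
       (n \<longlongrightarrow> 1) at_top \<and> (n \<longlongrightarrow> 1) at_bot \<and>
       (u \<longlongrightarrow> 0) at_top \<and> (u \<longlongrightarrow> 0) at_bot \<and>
       (\<phi> \<longlongrightarrow> 0) at_top \<and> (\<phi> \<longlongrightarrow> 0) at_bot)"

definition solitary_wave ::
  "real \<Rightarrow> real \<Rightarrow> real \<Rightarrow> (real \<Rightarrow> real) \<Rightarrow> (real \<Rightarrow> real) \<Rightarrow> (real \<Rightarrow> real) \<Rightarrow> bool" where
  "solitary_wave \<sigma> \<gamma> \<epsilon> n u \<phi> \<longleftrightarrow>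
     tw_solution \<sigma> \<gamma> \<epsilon> n u \<phi> \<and>
     \<not> (n = (\<lambda>_. 1) \<and> u = (\<lambda>_. 0) \<and> \<phi> = (\<lambda>_. 0)) \<and>
     (\<forall>x. n (- x) = n x \<and> u (- x) = u x \<and> \<phi> (- x) = \<phi> x) \<and>
     strict_antimono_on {0<..} n \<and> strict_antimono_on {0<..} u \<and>
     strict_antimono_on {0<..} \<phi>"

end

theory Submission
  imports Defs
begin

(* Two first integrals reduce the system to one equation for the density: with
   w = (V + \<gamma> \<epsilon>)^2 one has \<phi> = G(n) and \<epsilon> \<phi>'^2 / 2 = K(n) for explicit functions G and K
   (wave_G and wave_K below), hence \<epsilon> G'(n)^2 n'^2 / 2 = K(n).  Since w - (1 + \<sigma>) = O(\<epsilon>),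
   K(1) = K'(1) = 0, K''(1) = O(\<epsilon>) and K''' \<le> -6c < 0 near 1, uniformly in \<epsilon>.  The Taylor bound
   K(1 + t) \<le> K''(1) t^2 / 2 - c t^3 together with K(n) \<ge> 0 makes the amplitude M = n(0) - 1 of
   order \<epsilon>, and the bound K(1 + m) \<ge> c m^2 (M - m) for 0 \<le> m \<le> M gives the steepness estimate
   n'^2 \<ge> (k / \<epsilon>) m^2 (M - m) for m = n - 1 on (0, \<infinity>).  This estimate forces m below M / 2
   within time O(sqrt (\<epsilon> / M)) and then below \<delta> \<epsilon> within a further time O(sqrt (M / \<epsilon>) / \<delta>);
   when M > \<delta> \<epsilon> (otherwise there is nothing to prove) both times are bounded independently
   of \<epsilon>. *)

lemma eventually_nhds_pair_square:
  fixes a b :: real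
  assumes "eventually P (nhds (a, b))"
  shows "\<exists>r>0. \<forall>w x. \<bar>w - a\<bar> < r \<longrightarrow> \<bar>x - b\<bar> < r \<longrightarrow> P (w, x)"
proof -
  obtain Pa Pb where "eventually Pa (nhds a)" "eventually Pb (nhds b)"
    and P: "\<And>w x. Pa w \<Longrightarrow> Pb x \<Longrightarrow> P (w, x)"
    using assms unfolding nhds_prod eventually_prod_filter by blast
  then obtain ra rb where "ra > 0" "rb > 0"
    and "\<And>w. dist w a < ra \<Longrightarrow> Pa w" "\<And>x. dist x b < rb \<Longrightarrow> Pb x"
    unfolding eventually_nhds_metric by metis
  then show ?thesis
    by (intro exI[of _ "min ra rb"]) (auto simp: dist_real_def intro: P)
qed

lemma DERIV_comparison:
  fixes f g f' g' :: "real \<Rightarrow> real"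
  assumes "a \<le> b"
    and f: "\<And>t. a \<le> t \<Longrightarrow> t \<le> b \<Longrightarrow> (f has_real_derivative f' t) (at t)"
    and g: "\<And>t. a \<le> t \<Longrightarrow> t \<le> b \<Longrightarrow> (g has_real_derivative g' t) (at t)"
    and le: "\<And>t. a \<le> t \<Longrightarrow> t \<le> b \<Longrightarrow> f' t \<le> g' t"
    and "f a \<le> g a"
  shows "f b \<le> g b"
proof -
  have "g a - f a \<le> g b - f b"
  proof (rule DERIV_nonneg_imp_increasing_open[OF \<open>a \<le> b\<close>])
    fix t assume "a < t" "t < b"
    then show "\<exists>y. ((\<lambda>t. g t - f t) has_real_derivative y) (at t) \<and> 0 \<le> y"
      using f g le by (intro exI[of _ "g' t - f' t"]) (auto intro: DERIV_diff)
  next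
    have "isCont (\<lambda>t. g t - f t) t" if "t \<in> {a..b}" for t
      using DERIV_isCont[OF f] DERIV_isCont[OF g] that by (auto intro!: isCont_diff)
    then show "continuous_on {a..b} (\<lambda>t. g t - f t)"
      by (simp add: continuous_at_imp_continuous_on)
  qed
  with \<open>f a \<le> g a\<close> show ?thesis by simp
qed

lemma DERIV_zero_tendsto_imp_eq:
  fixes f :: "real \<Rightarrow> real"
  assumes "\<And>x. (f has_real_derivative 0) (at x)" and "(f \<longlongrightarrow> L) at_top"
  shows "f x = L"
proof -
  have "f = (\<lambda>_. f 0)"
    using DERIV_isconst_all assms(1) by blast
  with assms(2) show ?thesis
    by (metis tendsto_const_iff trivial_limit_at_top_linorder)
qed

lemma tendsto_deriv_square_imp_zero:
  fixes f f' :: "real \<Rightarrow> real"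
  assumes lim: "(f \<longlongrightarrow> a) at_top"
    and der: "\<And>x. (f has_real_derivative f' x) (at x)"
    and lim': "((\<lambda>x. (f' x)^2) \<longlongrightarrow> L) at_top"
  shows "L = 0"
proof (rule ccontr)
  have "L \<ge> 0"
    by (rule tendsto_lowerbound[OF lim']) auto
  moreover assume "L \<noteq> 0"
  ultimately have "L > 0" by simp
  obtain X1 where X1: "\<And>x. x \<ge> X1 \<Longrightarrow> (f' x)^2 > L / 2"
    using order_tendstoD(1)[OF lim', of "L / 2"] \<open>L > 0\<close>
    unfolding eventually_at_top_linorder by auto
  obtain X2 where X2: "\<And>x. x \<ge> X2 \<Longrightarrow> \<bar>f x - a\<bar> < 1"
    using tendstoD[OF lim, of 1] unfolding eventually_at_top_linorder dist_real_def by auto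
  define X where "X = max X1 X2"
  define t where "t = sqrt (8 / L)"
  have "t > 0" "t^2 = 8 / L"
    using \<open>L > 0\<close> by (simp_all add: t_def)
  then obtain z where z: "X < z" "f (X + t) - f X = t * f' z"
    using MVT2[of X "X + t" f f'] der by auto
  \<comment> \<open>a slope of size at least \<open>sqrt (L / 2)\<close> over a length \<open>t\<close> moves \<open>f\<close> by at least 2\<close>
  have "4 = t^2 * (L / 2)"
    using \<open>t^2 = 8 / L\<close> \<open>L > 0\<close> by simp
  also have "\<dots> < t^2 * (f' z)^2"
    using X1[of z] z(1) \<open>t > 0\<close> by (simp add: X_def)
  also have "\<dots> = (f (X + t) - f X)^2"
    by (simp add: z(2) power_mult_distrib)
  finally have "2^2 < \<bar>f (X + t) - f X\<bar>^2" by simp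
  then have "2 < \<bar>f (X + t) - f X\<bar>"
    using power_less_imp_less_base by fastforce
  moreover have "\<bar>f (X + t) - a\<bar> < 1" "\<bar>f X - a\<bar> < 1"
    using X2 \<open>t > 0\<close> by (auto simp: X_def)
  ultimately show False by linarith
qed

lemma strict_antimono_on_atLeast:
  fixes f :: "real \<Rightarrow> real"
  assumes cont: "isCont f a" and mono: "strict_antimono_on {a<..} f"
    and "a \<le> x" "x < y"
  shows "f y < f x"
proof (cases "x = a")
  case True
  define z where "z = (a + y) / 2"
  have "a < z" "z < y"
    using \<open>x < y\<close> True by (auto simp: z_def)
  have "eventually (\<lambda>t. f z \<le> f t) (at_right a)"
    using \<open>a < z\<close> mono unfolding eventually_at_right_field monotone_on_def
    by (auto intro!: exI[of _ z] less_imp_le)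
  then have "f z \<le> f a"
    using cont by (intro tendsto_lowerbound[of f _ "at_right a"])
      (auto simp: isCont_def filterlim_at_split trivial_limit_at_right_real)
  moreover have "f y < f z"
    using mono \<open>a < z\<close> \<open>z < y\<close> unfolding monotone_on_def by auto
  ultimately show ?thesis using True by simp
next
  case False
  with assms show ?thesis unfolding monotone_on_def by auto
qed

lemma smooth_real_has_derivative:
  assumes "smooth_real f"
  shows "(f has_real_derivative deriv f x) (at x)"
    and "(deriv f has_real_derivative deriv (deriv f) x) (at x)"
proof -
  have "((deriv ^^ 0) f) differentiable (at x)" "((deriv ^^ 1) f) differentiable (at x)"
    using assms unfolding smooth_real_def by blast+
  then show "(f has_real_derivative deriv f x) (at x)"
    and "(deriv f has_real_derivative deriv (deriv f) x) (at x)"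
    by (simp_all add: DERIV_deriv_iff_real_differentiable)
qed

section \<open>Decay under a steepness bound\<close>

lemma MVT_sqrt_drop:
  fixes m m' :: "real \<Rightarrow> real"
  assumes der: "\<And>x. (m has_real_derivative m' x) (at x)"
    and dec: "\<And>x y. 0 \<le> x \<Longrightarrow> x < y \<Longrightarrow> m y < m x" and "T > 0"
  obtains z where "0 < z" "z < T" "m 0 - m T = T^2 * ((m' z)^2 / (4 * (m 0 - m z)))"
proof -
  have pos: "m 0 - m x > 0" if "x > 0" for x
    using dec[of 0 x] that by simp
  define g where "g x = sqrt (m 0 - m x)" for x
  have g': "(g has_real_derivative - m' x / (2 * sqrt (m 0 - m x))) (at x)" if "x > 0" for x
    unfolding g_def using pos[OF that] der[of x]
    by (auto intro!: derivative_eq_intros simp: divide_simps)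
  have "continuous_on {0..T} g"
    unfolding g_def using der
    by (intro continuous_intros) (meson DERIV_isCont continuous_at_imp_continuous_on)
  then obtain z where z: "0 < z" "z < T" "g T - g 0 = T * (- m' z / (2 * sqrt (m 0 - m z)))"
    using MVT[OF \<open>T > 0\<close>, of g] g' by (metis DERIV_unique real_differentiable_def diff_zero)
  have "m 0 - m T = (g T - g 0)^2"
    using pos[OF \<open>T > 0\<close>] by (simp add: g_def)
  also have "\<dots> = T^2 * ((m' z)^2 / (4 * (m 0 - m z)))"
    using pos[OF z(1)] by (simp add: z(3) power_mult_distrib power_divide)
  finally show ?thesis
    by (rule that[OF z(1,2)])
qed

lemma decay_below_half:
  fixes m m' :: "real \<Rightarrow> real" and \<kappa> T :: real
  assumes der: "\<And>x. (m has_real_derivative m' x) (at x)"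
    and dec: "\<And>x y. 0 \<le> x \<Longrightarrow> x < y \<Longrightarrow> m y < m x"
    and steep: "\<And>x. 0 < x \<Longrightarrow> \<kappa> * (m x)^2 * (m 0 - m x) \<le> (m' x)^2"
    and "\<kappa> > 0" "m 0 > 0" "T > 0" and T: "8 / (\<kappa> * m 0) < T^2"
  shows "m T < m 0 / 2"
proof (rule ccontr)
  define M where "M = m 0"
  assume "\<not> m T < m 0 / 2"
  obtain z where z: "0 < z" "z < T" "M - m T = T^2 * ((m' z)^2 / (4 * (M - m z)))"
    using MVT_sqrt_drop[OF der dec \<open>T > 0\<close>] unfolding M_def by blast
  \<comment> \<open>while \<open>m \<ge> M / 2\<close>, the steepness bound makes \<open>sqrt (M - m)\<close> grow at least linearly\<close>
  have "\<kappa> * (M / 2)^2 \<le> \<kappa> * (m z)^2"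
    using dec[of z T] z \<open>\<not> m T < m 0 / 2\<close> \<open>\<kappa> > 0\<close> \<open>m 0 > 0\<close>
    by (auto simp: M_def intro!: power_mono)
  also have "\<dots> \<le> (m' z)^2 / (M - m z)"
    using steep[OF z(1)] dec[of 0 z] z(1) by (simp add: M_def pos_le_divide_eq)
  finally have "\<kappa> * (M / 2)^2 / 4 \<le> (m' z)^2 / (M - m z) / 4"
    by (rule divide_right_mono) simp
  then have "T^2 * (\<kappa> * (M / 2)^2 / 4) \<le> M - m T"
    unfolding z(3) by (intro mult_left_mono) (simp_all add: divide_divide_eq_left mult.commute)
  then have "T^2 * (\<kappa> * M^2) \<le> 16 * (M - m T)"
    by (simp add: power_divide)
  moreover have "8 * M < T^2 * (\<kappa> * M^2)"
    using T \<open>\<kappa> > 0\<close> \<open>m 0 > 0\<close> by (simp add: M_def field_simps power2_eq_square)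
  moreover have "2 * (M - m T) \<le> M"
    using \<open>\<not> m T < m 0 / 2\<close> by (simp add: M_def)
  ultimately show False by linarith
qed

lemma decay_time_between_levels:
  fixes m m' :: "real \<Rightarrow> real" and \<kappa> \<theta> T \<xi> :: real
  assumes der: "\<And>x. (m has_real_derivative m' x) (at x)"
    and dec: "\<And>x y. 0 \<le> x \<Longrightarrow> x < y \<Longrightarrow> m y < m x"
    and steep: "\<And>x. 0 < x \<Longrightarrow> \<kappa> * (m x)^2 * (m 0 - m x) \<le> (m' x)^2"
    and "\<kappa> > 0" "\<theta> > 0" "0 < T" "T < \<xi>" and "m T < m 0 / 2" "\<theta> < m \<xi>"
  shows "(\<xi> - T)^2 * (\<kappa> * \<theta>^2 * (m 0 / 2)) < (m 0 / 2)^2"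
proof -
  obtain z where z: "T < z" "z < \<xi>" "m \<xi> - m T = (\<xi> - T) * m' z"
    using MVT2[OF \<open>T < \<xi>\<close>, of m m'] der by blast
  have "\<theta> < m z" "m z < m 0 / 2"
    using dec[of z \<xi>] dec[of T z] z \<open>0 < T\<close> \<open>m T < m 0 / 2\<close> \<open>\<theta> < m \<xi>\<close> by auto
  then have "\<kappa> * \<theta>^2 * (m 0 / 2) \<le> \<kappa> * (m z)^2 * (m 0 - m z)"
    using \<open>\<kappa> > 0\<close> \<open>\<theta> > 0\<close> by (intro mult_mono mult_left_mono power_mono) auto
  also have "\<dots> \<le> (m' z)^2"
    using steep[of z] z(1) \<open>T > 0\<close> by simp
  finally have "(\<xi> - T)^2 * (\<kappa> * \<theta>^2 * (m 0 / 2)) \<le> (\<xi> - T)^2 * (m' z)^2"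
    by (rule mult_left_mono) simp
  also have "\<dots> = (m T - m \<xi>)^2"
    by (metis z(3) power_mult_distrib power2_commute)
  also have "\<dots> < (m 0 / 2)^2"
    using dec[of T \<xi>] \<open>0 < T\<close> \<open>T < \<xi>\<close> \<open>m T < m 0 / 2\<close> \<open>\<theta> < m \<xi>\<close> \<open>\<theta> > 0\<close>
    by (intro power_strict_mono) auto
  finally show ?thesis .
qed

lemma decay_below_level:
  fixes m m' :: "real \<Rightarrow> real" and \<kappa> \<theta> B \<xi> :: real
  assumes der: "\<And>x. (m has_real_derivative m' x) (at x)"
    and dec: "\<And>x y. 0 \<le> x \<Longrightarrow> x < y \<Longrightarrow> m y < m x"
    and steep: "\<And>x. 0 < x \<Longrightarrow> \<kappa> * (m x)^2 * (m 0 - m x) \<le> (m' x)^2"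
    and "\<kappa> > 0" "\<theta> > 0" "0 \<le> B" "m 0 \<le> B"
    and \<xi>: "sqrt (8 / (\<kappa> * \<theta>)) + sqrt (B / (\<kappa> * \<theta>^2)) \<le> \<xi>"
  shows "m \<xi> \<le> \<theta>"
proof (rule ccontr)
  define T1 where "T1 = sqrt (8 / (\<kappa> * \<theta>))"
  define T2 where "T2 = sqrt (B / (\<kappa> * \<theta>^2))"
  assume "\<not> m \<xi> \<le> \<theta>"
  have "T1 > 0" "T2 \<ge> 0" "T1 + T2 \<le> \<xi>"
    using \<open>\<kappa> > 0\<close> \<open>\<theta> > 0\<close> \<open>0 \<le> B\<close> \<xi> by (auto simp: T1_def T2_def)
  then have "\<theta> < m 0"
    using dec[of 0 \<xi>] \<open>\<not> m \<xi> \<le> \<theta>\<close> by simp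
  then have "8 / (\<kappa> * m 0) < T1^2"
    using \<open>\<kappa> > 0\<close> \<open>\<theta> > 0\<close> by (simp add: T1_def frac_less2)
  then have "m T1 < m 0 / 2"
    using decay_below_half[OF der dec steep \<open>\<kappa> > 0\<close> _ \<open>T1 > 0\<close>] \<open>\<theta> < m 0\<close> \<open>\<theta> > 0\<close> by simp
  have "T2 > 0"
    using \<open>\<theta> < m 0\<close> \<open>\<kappa> > 0\<close> \<open>\<theta> > 0\<close> \<open>m 0 \<le> B\<close> by (simp add: T2_def)
  then have "T1 < \<xi>" "T2 \<le> \<xi> - T1"
    using \<open>T1 + T2 \<le> \<xi>\<close> by linarith+
  have "B * (m 0 / 2) = T2^2 * (\<kappa> * \<theta>^2 * (m 0 / 2))"
    using \<open>\<kappa> > 0\<close> \<open>\<theta> > 0\<close> \<open>0 \<le> B\<close> by (simp add: T2_def)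
  also have "\<dots> \<le> (\<xi> - T1)^2 * (\<kappa> * \<theta>^2 * (m 0 / 2))"
    using \<open>T2 \<le> \<xi> - T1\<close> \<open>T2 > 0\<close> \<open>\<kappa> > 0\<close> \<open>\<theta> < m 0\<close> \<open>\<theta> > 0\<close>
    by (intro mult_right_mono power_mono) auto
  also have "\<dots> < (m 0 / 2)^2"
    using decay_time_between_levels[OF der dec steep \<open>\<kappa> > 0\<close> \<open>\<theta> > 0\<close> \<open>T1 > 0\<close> \<open>T1 < \<xi>\<close>
        \<open>m T1 < m 0 / 2\<close>] \<open>\<not> m \<xi> \<le> \<theta>\<close> by simp
  finally have "B < m 0 / 2"
    using \<open>\<theta> < m 0\<close> \<open>\<theta> > 0\<close> by (simp add: power2_eq_square)
  with \<open>m 0 \<le> B\<close> \<open>\<theta> < m 0\<close> \<open>\<theta> > 0\<close> show False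
    by linarith
qed

section \<open>Functions with a negative third derivative\<close>

locale cubic_taylor_bound =
  fixes f f' f'' f''' :: "real \<Rightarrow> real" and r c :: real
  assumes has_derivative_f: "\<And>t. 0 \<le> t \<Longrightarrow> t < r \<Longrightarrow> (f has_real_derivative f' t) (at t)"
    and has_derivative_f': "\<And>t. 0 \<le> t \<Longrightarrow> t < r \<Longrightarrow> (f' has_real_derivative f'' t) (at t)"
    and has_derivative_f'': "\<And>t. 0 \<le> t \<Longrightarrow> t < r \<Longrightarrow> (f'' has_real_derivative f''' t) (at t)"
    and f_0: "f 0 = 0" and f'_0: "f' 0 = 0"
    and f'''_le: "\<And>t. 0 \<le> t \<Longrightarrow> t < r \<Longrightarrow> f''' t \<le> - 6 * c"
begin

lemma f''_le:
  assumes "0 \<le> t" "t < r"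
  shows "f'' t \<le> f'' 0 - 6 * c * t"
  using assms
  by (intro DERIV_comparison[where a = 0 and b = t and f = f'' and f' = f'''
        and g = "\<lambda>t. f'' 0 - 6 * c * t" and g' = "\<lambda>_. - 6 * c"])
     (use f'''_le in \<open>auto intro!: has_derivative_f'' derivative_eq_intros\<close>)

lemma f'_le:
  assumes "0 \<le> t" "t < r"
  shows "f' t \<le> f'' 0 * t - 3 * c * t^2"
  using assms
  by (intro DERIV_comparison[where a = 0 and b = t and f = f' and f' = f''
        and g = "\<lambda>t. f'' 0 * t - 3 * c * t^2" and g' = "\<lambda>t. f'' 0 - 6 * c * t"])
     (use f''_le in \<open>auto intro!: has_derivative_f' derivative_eq_intros simp: f'_0\<close>)

lemma f_le:
  assumes "0 \<le> t" "t < r"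
  shows "f t \<le> f'' 0 * t^2 / 2 - c * t^3"
  using assms
  by (intro DERIV_comparison[where a = 0 and b = t and f = f and f' = f'
        and g = "\<lambda>t. f'' 0 * t^2 / 2 - c * t^3" and g' = "\<lambda>t. f'' 0 * t - 3 * c * t^2"])
     (use f'_le in \<open>auto intro!: has_derivative_f derivative_eq_intros simp: f_0\<close>)

lemma f''_secant_le:
  assumes "0 \<le> t" "t < r"
  shows "t * f'' t - f' t \<le> - 3 * c * t^2"
proof (rule DERIV_comparison[where a = 0 and b = t and f = "\<lambda>t. t * f'' t - f' t"
    and g = "\<lambda>t. - 3 * c * t^2" and f' = "\<lambda>t. t * f''' t" and g' = "\<lambda>t. - 6 * c * t"])
  fix x assume x: "0 \<le> x" "x \<le> t"
  show "((\<lambda>t. t * f'' t - f' t) has_real_derivative x * f''' x) (at x)"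
    using x assms
    by (auto intro!: derivative_eq_intros has_derivative_f' has_derivative_f'')
  have "x * f''' x \<le> x * (- 6 * c)"
    using x assms by (intro mult_left_mono f'''_le) auto
  then show "x * f''' x \<le> - 6 * c * x"
    by (simp add: mult.commute)
qed (use assms in \<open>auto intro!: derivative_eq_intros simp: f'_0\<close>)

lemma f'_secant_le:
  assumes "0 \<le> t" "t < r"
  shows "t * f' t - 2 * f t \<le> - c * t^3"
proof (rule DERIV_comparison[where a = 0 and b = t and f = "\<lambda>t. t * f' t - 2 * f t"
    and g = "\<lambda>t. - c * t^3" and f' = "\<lambda>t. t * f'' t - f' t" and g' = "\<lambda>t. - 3 * c * t^2"])
  fix x assume x: "0 \<le> x" "x \<le> t"
  show "((\<lambda>t. t * f' t - 2 * f t) has_real_derivative x * f'' x - f' x) (at x)"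
    using x assms
    by (auto intro!: derivative_eq_intros has_derivative_f has_derivative_f')
  show "x * f'' x - f' x \<le> - 3 * c * x^2"
    using x assms by (intro f''_secant_le) auto
qed (use assms in \<open>auto intro!: derivative_eq_intros simp: f_0 eval_nat_numeral\<close>)

lemma lower_bound_below_root:
  assumes "0 \<le> t" "t \<le> T" "T < r" and "f T \<ge> 0"
  shows "c * t^2 * (T - t) \<le> f t"
proof (cases "t = 0")
  case False
  then have "t > 0" using assms by simp
  \<comment> \<open>\<open>f t / t\<^sup>2 + c * t\<close> is decreasing, by the secant bound\<close>
  let ?h = "\<lambda>t. f t / t^2 + c * t"
  have "?h T \<le> ?h t"
  proof (rule DERIV_comparison[where a = t and b = T and f = ?h and g = "\<lambda>_. ?h t"
      and f' = "\<lambda>t. (t * f' t - 2 * f t) / t^3 + c" and g' = "\<lambda>_. 0"])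
    fix x assume x: "t \<le> x" "x \<le> T"
    then have "x > 0" "x < r"
      using \<open>t > 0\<close> assms by auto
    have "(?h has_real_derivative (f' x * x^2 - f x * (2 * x)) / (x^2 * x^2) + c) (at x)"
      using \<open>x > 0\<close> \<open>x < r\<close>
      by (auto intro!: derivative_eq_intros has_derivative_f simp: power2_eq_square)
    moreover have "(f' x * x^2 - f x * (2 * x)) / (x^2 * x^2) = (x * f' x - 2 * f x) / x^3"
      using \<open>x > 0\<close> by (simp add: divide_simps power2_eq_square power3_eq_cube) algebra
    ultimately show "(?h has_real_derivative (x * f' x - 2 * f x) / x^3 + c) (at x)"
      by simp
    have "x * f' x - 2 * f x \<le> - c * x^3"
      using \<open>x > 0\<close> \<open>x < r\<close> by (intro f'_secant_le) auto
    then show "(x * f' x - 2 * f x) / x^3 + c \<le> 0"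
      using \<open>x > 0\<close> by (simp add: divide_simps)
  qed (use assms in auto)
  moreover have "f T / T^2 \<ge> 0"
    using \<open>f T \<ge> 0\<close> by simp
  ultimately have "c * (T - t) \<le> f t / t^2"
    by (simp add: algebra_simps)
  with \<open>t > 0\<close> show ?thesis
    by (simp add: field_simps)
qed (simp add: f_0)

lemma nonneg_imp_curvature_ge:
  assumes "0 < t" "t < r" "f t \<ge> 0"
  shows "2 * c * t \<le> f'' 0"
proof -
  have "0 \<le> f'' 0 * t^2 / 2 - c * t^3"
    using f_le[of t] assms by linarith
  then have "t^2 * (2 * c * t) \<le> t^2 * f'' 0"
    by (simp add: power3_eq_cube power2_eq_square algebra_simps)
  then show ?thesis
    using \<open>0 < t\<close> by (simp only: mult_le_cancel_left_pos zero_less_power)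
qed

end

section \<open>The potentials of the travelling-wave system\<close>


definition wave_G :: "real \<Rightarrow> real \<Rightarrow> real \<Rightarrow> real" where
  "wave_G s w x = w / 2 * (1 - 1 / x^2) - s * ln x"

definition wave_G' :: "real \<Rightarrow> real \<Rightarrow> real \<Rightarrow> real" where
  "wave_G' s w x = w / x^3 - s / x"

definition wave_G'' :: "real \<Rightarrow> real \<Rightarrow> real \<Rightarrow> real" where
  "wave_G'' s w x = -3 * w / x^4 + s / x^2"

definition wave_G''' :: "real \<Rightarrow> real \<Rightarrow> real \<Rightarrow> real" where
  "wave_G''' s w x = 12 * w / x^5 - 2 * s / x^3"

definition wave_K :: "real \<Rightarrow> real \<Rightarrow> real \<Rightarrow> real" where
  "wave_K s w x = exp (wave_G s w x) - 1 - w * (1 - 1 / x) + s * (x - 1)"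

definition wave_K' :: "real \<Rightarrow> real \<Rightarrow> real \<Rightarrow> real" where
  "wave_K' s w x = wave_G' s w x * (exp (wave_G s w x) - x)"

definition wave_K'' :: "real \<Rightarrow> real \<Rightarrow> real \<Rightarrow> real" where
  "wave_K'' s w x = wave_G'' s w x * (exp (wave_G s w x) - x)
     + wave_G' s w x * (wave_G' s w x * exp (wave_G s w x) - 1)"

definition wave_K''' :: "real \<Rightarrow> real \<Rightarrow> real \<Rightarrow> real" where
  "wave_K''' s w x = wave_G''' s w x * (exp (wave_G s w x) - x)
     + 2 * wave_G'' s w x * (wave_G' s w x * exp (wave_G s w x) - 1)
     + wave_G' s w x * wave_G'' s w x * exp (wave_G s w x)
     + (wave_G' s w x)^3 * exp (wave_G s w x)"

lemma has_derivative_wave_G: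
  "x > 0 \<Longrightarrow> (wave_G s w has_real_derivative wave_G' s w x) (at x)"
  unfolding wave_G_def wave_G'_def
  by (auto intro!: derivative_eq_intros simp: field_simps power2_eq_square power3_eq_cube)

lemma has_derivative_wave_G':
  "x > 0 \<Longrightarrow> (wave_G' s w has_real_derivative wave_G'' s w x) (at x)"
  unfolding wave_G'_def wave_G''_def
  by (auto intro!: derivative_eq_intros simp: field_simps eval_nat_numeral)

lemma has_derivative_wave_G'':
  "x > 0 \<Longrightarrow> (wave_G'' s w has_real_derivative wave_G''' s w x) (at x)"
  unfolding wave_G''_def wave_G'''_def
  by (auto intro!: derivative_eq_intros simp: field_simps eval_nat_numeral)

lemma has_derivative_wave_K:
  "x > 0 \<Longrightarrow> (wave_K s w has_real_derivative wave_K' s w x) (at x)"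
  unfolding wave_K_def wave_K'_def
  by (rule derivative_eq_intros has_derivative_wave_G refl | simp)+
     (simp add: wave_G'_def field_simps eval_nat_numeral)

lemma has_derivative_wave_K':
  "x > 0 \<Longrightarrow> (wave_K' s w has_real_derivative wave_K'' s w x) (at x)"
  unfolding wave_K'_def wave_K''_def
  by (auto intro!: derivative_eq_intros has_derivative_wave_G has_derivative_wave_G'
      simp: field_simps)

lemma has_derivative_wave_K'':
  "x > 0 \<Longrightarrow> (wave_K'' s w has_real_derivative wave_K''' s w x) (at x)"
  unfolding wave_K''_def wave_K'''_def
  by (auto intro!: derivative_eq_intros has_derivative_wave_G has_derivative_wave_G'
      has_derivative_wave_G'' simp: field_simps eval_nat_numeral)

lemma wave_K_at_1: "wave_K s w 1 = 0" "wave_K' s w 1 = 0"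
  "wave_K'' s w 1 = (w - s) * (w - s - 1)"
  by (simp_all add: wave_K_def wave_K'_def wave_K''_def wave_G'_def wave_G''_def wave_G_def)

lemma wave_bounds_near_sonic_point:
  fixes s :: real
  assumes "s \<ge> 0"
  obtains r c where "0 < r" "r \<le> 1/2" "0 < c"
    and "\<And>w x. \<bar>w - (1 + s)\<bar> < r \<Longrightarrow> \<bar>x - 1\<bar> < r \<Longrightarrow>
           wave_K''' s w x \<le> - 6 * c \<and> (wave_G' s w x)^2 \<le> 4"
proof -
  let ?K = "\<lambda>p. wave_K''' s (fst p) (snd p)" and ?G = "\<lambda>p. (wave_G' s (fst p) (snd p))^2"
  have K: "isCont ?K (1 + s, 1)" and G: "isCont ?G (1 + s, 1)"
    unfolding wave_K'''_def wave_G'''_def wave_G''_def wave_G'_def wave_G_def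
    by (auto intro!: continuous_intros)
  note tendsto_nhds = tendsto_at_iff_tendsto_nhds[THEN iffD1]
  have "eventually (\<lambda>p. ?K p < - (1 + s)) (nhds (1 + s, 1))"
    by (rule order_tendstoD(2)[OF K[unfolded isCont_def, THEN tendsto_nhds]])
      (use assms in \<open>simp add: wave_K'''_def wave_G'''_def wave_G''_def wave_G'_def wave_G_def\<close>)
  moreover have "eventually (\<lambda>p. ?G p < 4) (nhds (1 + s, 1))"
    by (rule order_tendstoD(2)[OF G[unfolded isCont_def, THEN tendsto_nhds]])
      (simp add: wave_G'_def)
  ultimately have "eventually (\<lambda>p. ?K p < - (1 + s) \<and> ?G p < 4) (nhds (1 + s, 1))"
    by (rule eventually_conj)
  then obtain r where "r > 0" and r: "\<forall>w x. \<bar>w - (1 + s)\<bar> < r \<longrightarrow> \<bar>x - 1\<bar> < r \<longrightarrow>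
      ?K (w, x) < - (1 + s) \<and> ?G (w, x) < 4"
    using eventually_nhds_pair_square by blast
  show ?thesis
  proof (rule that[of "min (1/2) r" "(1 + s) / 6"])
    fix w x assume "\<bar>w - (1 + s)\<bar> < min (1/2) r" "\<bar>x - 1\<bar> < min (1/2) r"
    then have "?K (w, x) < - (1 + s) \<and> ?G (w, x) < 4"
      using r by simp
    then show "wave_K''' s w x \<le> - 6 * ((1 + s) / 6) \<and> (wave_G' s w x)^2 \<le> 4"
      by simp
  qed (use assms \<open>r > 0\<close> in auto)
qed

lemma wave_K_cubic_taylor_bound:
  assumes "\<And>x. 1 \<le> x \<Longrightarrow> x < 1 + r \<Longrightarrow> wave_K''' s w x \<le> - 6 * c"
  shows "cubic_taylor_bound (\<lambda>t. wave_K s w (t + 1)) (\<lambda>t. wave_K' s w (t + 1))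
           (\<lambda>t. wave_K'' s w (t + 1)) (\<lambda>t. wave_K''' s w (t + 1)) r c"
proof
  fix t :: real assume "0 \<le> t" "t < r"
  then have "t + 1 > 0" by simp
  then show "((\<lambda>t. wave_K s w (t + 1)) has_real_derivative wave_K' s w (t + 1)) (at t)"
    and "((\<lambda>t. wave_K' s w (t + 1)) has_real_derivative wave_K'' s w (t + 1)) (at t)"
    and "((\<lambda>t. wave_K'' s w (t + 1)) has_real_derivative wave_K''' s w (t + 1)) (at t)"
    by (auto intro!: DERIV_shift[THEN iffD1] has_derivative_wave_K has_derivative_wave_K'
        has_derivative_wave_K'')
  show "wave_K''' s w (t + 1) \<le> - 6 * c"
    using assms \<open>0 \<le> t\<close> \<open>t < r\<close> by simp
qed (simp_all add: wave_K_at_1)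

section \<open>Solitary waves\<close>

locale solitary_wave_profile =
  fixes \<sigma> \<gamma> \<epsilon> :: real and n u \<phi> :: "real \<Rightarrow> real"
  assumes sigma_nonneg: "\<sigma> \<ge> 0" and gamma_pos: "\<gamma> > 0" and eps_pos: "\<epsilon> > 0"
    and solitary: "solitary_wave \<sigma> \<gamma> \<epsilon> n u \<phi>"
begin

definition speed :: real where
  "speed = sqrt (1 + \<sigma>) + \<gamma> * \<epsilon>"

lemma speed_sq_excess_eq:
  "speed^2 - (1 + \<sigma>) = (2 * sqrt (1 + \<sigma>) * \<gamma> + \<gamma>^2 * \<epsilon>) * \<epsilon>"
  using sigma_nonneg by (simp add: speed_def power2_sum algebra_simps power2_eq_square)

lemma speed_sq_gt: "1 + \<sigma> < speed^2"
proof -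
  have "0 < (2 * sqrt (1 + \<sigma>) * \<gamma> + \<gamma>^2 * \<epsilon>) * \<epsilon>"
    using sigma_nonneg gamma_pos eps_pos by (intro mult_pos_pos add_nonneg_pos) auto
  then show ?thesis
    using speed_sq_excess_eq by linarith
qed

lemma speed_sq_excess_le:
  "\<epsilon> \<le> 1 \<Longrightarrow> speed^2 - (1 + \<sigma>) \<le> (2 * sqrt (1 + \<sigma>) * \<gamma> + \<gamma>^2) * \<epsilon>"
  unfolding speed_sq_excess_eq using eps_pos
  by (intro mult_right_mono add_left_mono) (auto intro: mult_left_le)

lemma
  shows n_pos: "n x > 0"
    and mass_eq: "- speed * deriv n x + deriv (\<lambda>y. n y * u y) x = 0"
    and momentum_eq: "- speed * deriv u x + u x * deriv u x + \<sigma> * deriv n x / n x = - deriv \<phi> x"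
    and poisson_eq: "\<epsilon> * deriv (deriv \<phi>) x = exp (\<phi> x) - n x"
    and n_tendsto: "(n \<longlongrightarrow> 1) at_top"
    and u_tendsto: "(u \<longlongrightarrow> 0) at_top"
    and phi_tendsto: "(\<phi> \<longlongrightarrow> 0) at_top"
  using solitary unfolding solitary_wave_def tw_solution_def Let_def speed_def by auto

lemma
  shows n_has_derivative: "(n has_real_derivative deriv n x) (at x)"
    and u_has_derivative: "(u has_real_derivative deriv u x) (at x)"
    and phi_has_derivative: "(\<phi> has_real_derivative deriv \<phi> x) (at x)"
    and phi'_has_derivative: "(deriv \<phi> has_real_derivative deriv (deriv \<phi>) x) (at x)"
  using solitary smooth_real_has_derivative
  unfolding solitary_wave_def tw_solution_def Let_def by blast+

lemma n_decreasing: "0 \<le> x \<Longrightarrow> x < y \<Longrightarrow> n y < n x"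
  using solitary DERIV_isCont[OF n_has_derivative]
  unfolding solitary_wave_def by (blast intro: strict_antimono_on_atLeast)

lemma n_gt_1: "x > 0 \<Longrightarrow> n x > 1"
proof -
  assume "x > 0"
  have "n y \<le> n (x + 1)" if "x + 1 \<le> y" for y
    using that \<open>x > 0\<close> n_decreasing[of "x + 1" y] by (cases "y = x + 1") auto
  then have "eventually (\<lambda>y. n y \<le> n (x + 1)) at_top"
    unfolding eventually_at_top_linorder by blast
  then have "1 \<le> n (x + 1)"
    by (rule tendsto_upperbound[OF n_tendsto]) simp
  also have "n (x + 1) < n x"
    using \<open>x > 0\<close> by (intro n_decreasing) auto
  finally show ?thesis .
qed

lemma u_eq: "u x = speed - speed / n x"
proof -
  have "n x * u x - speed * n x = - speed"
  proof (rule DERIV_zero_tendsto_imp_eq[where f = "\<lambda>x. n x * u x - speed * n x"])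
    fix x
    have "((\<lambda>y. n y * u y) has_real_derivative deriv (\<lambda>y. n y * u y) x) (at x)"
      using DERIV_mult[OF n_has_derivative u_has_derivative] by (metis DERIV_imp_deriv)
    then have "((\<lambda>x. n x * u x - speed * n x) has_real_derivative
        deriv (\<lambda>y. n y * u y) x - speed * deriv n x) (at x)"
      by (intro DERIV_diff DERIV_cmult n_has_derivative)
    then show "((\<lambda>x. n x * u x - speed * n x) has_real_derivative 0) (at x)"
      using mass_eq[of x] by simp
    show "((\<lambda>x. n x * u x - speed * n x) \<longlongrightarrow> - speed) at_top"
      using tendsto_diff[OF tendsto_mult[OF n_tendsto u_tendsto] tendsto_mult_left[OF n_tendsto]]
      by simp
  qed
  then show ?thesis
    using n_pos[of x] by (simp add: field_simps)
qed

lemma phi_eq: "\<phi> x = wave_G \<sigma> (speed^2) (n x)"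
proof -
  let ?B = "\<lambda>x. - speed * u x + (u x)^2 / 2 + \<sigma> * ln (n x) + \<phi> x"
  have "?B x = 0"
  proof (rule DERIV_zero_tendsto_imp_eq[where f = ?B])
    fix x
    have "(?B has_real_derivative
        - speed * deriv u x + u x * deriv u x + \<sigma> * (deriv n x / n x) + deriv \<phi> x) (at x)"
      using n_pos[of x]
      by (auto intro!: derivative_eq_intros u_has_derivative n_has_derivative phi_has_derivative)
    then show "(?B has_real_derivative 0) (at x)"
      using momentum_eq[of x] by simp
    have "(?B \<longlongrightarrow> - speed * 0 + 0^2 / 2 + \<sigma> * ln 1 + 0) at_top"
      by (intro tendsto_intros n_tendsto u_tendsto phi_tendsto) simp_all
    then show "(?B \<longlongrightarrow> 0) at_top" by simp
  qed
  then have "\<phi> x = speed * u x - (u x)^2 / 2 - \<sigma> * ln (n x)"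
    by simp
  then show ?thesis
    using n_pos[of x] unfolding wave_G_def u_eq
    by (simp add: field_simps power2_eq_square)
qed

lemma deriv_phi_eq: "deriv \<phi> x = wave_G' \<sigma> (speed^2) (n x) * deriv n x"
proof -
  have "((\<lambda>y. wave_G \<sigma> (speed^2) (n y)) has_real_derivative
      wave_G' \<sigma> (speed^2) (n x) * deriv n x) (at x)"
    by (rule DERIV_chain2[OF has_derivative_wave_G[OF n_pos] n_has_derivative])
  then show ?thesis
    using phi_has_derivative[of x] by (simp add: phi_eq[abs_def] DERIV_unique)
qed

lemma energy_conservation:
  obtains L where "\<And>x. \<epsilon> * (deriv \<phi> x)^2 / 2 = wave_K \<sigma> (speed^2) (n x) + L"
proof -
  define E where "E y = \<epsilon> * (deriv \<phi> y)^2 / 2 - exp (\<phi> y) - speed^2 / n y - \<sigma> * n y" for y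
  have "(E has_real_derivative 0) (at x)" for x
  proof -
    have "(E has_real_derivative deriv \<phi> x * (\<epsilon> * deriv (deriv \<phi>) x) - exp (\<phi> x) * deriv \<phi> x
        + speed^2 * deriv n x / (n x)^2 - \<sigma> * deriv n x) (at x)"
      unfolding E_def using n_pos[of x]
      by (auto intro!: derivative_eq_intros n_has_derivative phi_has_derivative
          phi'_has_derivative simp: power2_eq_square)
    moreover have "n x * wave_G' \<sigma> (speed^2) (n x) = speed^2 / (n x)^2 - \<sigma>"
      using n_pos[of x] by (simp add: wave_G'_def field_simps power2_eq_square power3_eq_cube)
    ultimately show ?thesis
      by (simp add: poisson_eq deriv_phi_eq algebra_simps)
  qed
  then have E_const: "E x = E 0" for x
    using DERIV_isconst_all by blast
  have "\<epsilon> * (deriv \<phi> x)^2 / 2 = wave_K \<sigma> (speed^2) (n x) + (E 0 + 1 + speed^2 + \<sigma>)" for x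
    using E_const[of x] n_pos[of x] unfolding E_def wave_K_def phi_eq[symmetric]
    by (simp add: field_simps)
  then show ?thesis ..
qed

lemma energy_eq: "\<epsilon> * (deriv \<phi> x)^2 / 2 = wave_K \<sigma> (speed^2) (n x)"
proof -
  obtain L where L: "\<And>x. \<epsilon> * (deriv \<phi> x)^2 / 2 = wave_K \<sigma> (speed^2) (n x) + L"
    using energy_conservation by blast
  have "((\<lambda>x. wave_K \<sigma> (speed^2) (n x)) \<longlongrightarrow> wave_K \<sigma> (speed^2) 1) at_top"
    by (rule isCont_tendsto_compose[OF _ n_tendsto])
      (auto intro!: continuous_intros simp: wave_K_def wave_G_def)
  then have "((\<lambda>x. wave_K \<sigma> (speed^2) (n x) + L) \<longlongrightarrow> 0 + L) at_top"
    by (intro tendsto_add) (simp_all add: wave_K_at_1)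
  then have "((\<lambda>x. 2 / \<epsilon> * (wave_K \<sigma> (speed^2) (n x) + L)) \<longlongrightarrow> 2 / \<epsilon> * (0 + L)) at_top"
    by (rule tendsto_mult_left)
  moreover have "(deriv \<phi> x)^2 = 2 / \<epsilon> * (wave_K \<sigma> (speed^2) (n x) + L)" for x
    using L[of x] eps_pos by (simp add: field_simps)
  ultimately have "((\<lambda>x. (deriv \<phi> x)^2) \<longlongrightarrow> 2 / \<epsilon> * (0 + L)) at_top"
    by simp
  then have "2 / \<epsilon> * (0 + L) = 0"
    by (rule tendsto_deriv_square_imp_zero[OF phi_tendsto phi_has_derivative])
  with L eps_pos show ?thesis by simp
qed

lemma wave_K_n_nonneg: "wave_K \<sigma> (speed^2) (n x) \<ge> 0"
  unfolding energy_eq[symmetric] using eps_pos by simp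

lemma amplitude_less:
  assumes taylor: "cubic_taylor_bound (\<lambda>t. wave_K \<sigma> (speed^2) (t + 1)) K' K'' K''' r c"
    and "r > 0" and small: "K'' 0 < c * r"
  shows "n 0 - 1 < r"
proof (rule ccontr)
  assume "\<not> n 0 - 1 < r"
  obtain X where X: "\<And>x. x \<ge> X \<Longrightarrow> n x < 1 + r / 2"
    using order_tendstoD(2)[OF n_tendsto, of "1 + r / 2"] \<open>r > 0\<close>
    unfolding eventually_at_top_linorder by auto
  \<comment> \<open>the profile passes through the level \<open>1 + r / 2\<close>, where the potential is negative\<close>
  obtain x where "n x = 1 + r / 2"
    using IVT2[of n "max X 0" "1 + r / 2" 0] X[of "max X 0"] \<open>\<not> n 0 - 1 < r\<close> \<open>r > 0\<close>
      DERIV_isCont[OF n_has_derivative] by force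
  then have "2 * c * (r / 2) \<le> K'' 0"
    using cubic_taylor_bound.nonneg_imp_curvature_ge[OF taylor, of "r / 2"] wave_K_n_nonneg[of x]
      \<open>r > 0\<close> by (simp add: add.commute)
  with small show False by simp
qed

lemma energy_eq_density:
  "\<epsilon> * (wave_G' \<sigma> (speed^2) (n x))^2 * (deriv n x)^2 / 2 = wave_K \<sigma> (speed^2) (n x)"
  using energy_eq[of x] by (simp add: deriv_phi_eq power_mult_distrib mult.assoc)

lemma amplitude_and_steepness:
  assumes "0 < r" "0 < c" and \<eta>: "speed^2 - (1 + \<sigma>) \<le> \<eta>" "\<eta> \<le> 1" "\<eta> < c * r / 2"
    and near: "\<And>x. \<bar>x - 1\<bar> < r \<Longrightarrow>
      wave_K''' \<sigma> (speed^2) x \<le> - 6 * c \<and> (wave_G' \<sigma> (speed^2) x)^2 \<le> 4"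
  shows "n 0 - 1 \<le> \<eta> / c"
    and "\<And>x. 0 < x \<Longrightarrow> c * (n x - 1)^2 * (n 0 - n x) \<le> 2 * \<epsilon> * (deriv n x)^2"
proof -
  interpret taylor: cubic_taylor_bound "\<lambda>t. wave_K \<sigma> (speed^2) (t + 1)"
    "\<lambda>t. wave_K' \<sigma> (speed^2) (t + 1)" "\<lambda>t. wave_K'' \<sigma> (speed^2) (t + 1)"
    "\<lambda>t. wave_K''' \<sigma> (speed^2) (t + 1)" r c
    using near by (intro wave_K_cubic_taylor_bound) auto
  have "wave_K'' \<sigma> (speed^2) 1 \<le> 2 * \<eta>"
    using \<eta> speed_sq_gt unfolding wave_K_at_1
    by (intro mult_mono) (auto simp: less_imp_le)
  then have "n 0 - 1 < r"
    using amplitude_less[OF taylor.cubic_taylor_bound_axioms \<open>0 < r\<close>] \<eta> by simp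
  moreover have "0 < n 0 - 1"
    using n_gt_1[of 1] n_decreasing[of 0 1] by simp
  ultimately show "n 0 - 1 \<le> \<eta> / c"
    using taylor.nonneg_imp_curvature_ge[of "n 0 - 1"] wave_K_n_nonneg[of 0]
      \<open>wave_K'' \<sigma> (speed^2) 1 \<le> 2 * \<eta>\<close> \<open>0 < c\<close> by (simp add: field_simps)
  fix x :: real assume "0 < x"
  then have "1 < n x" "n x < n 0"
    using n_gt_1 n_decreasing[of 0 x] by auto
  then have "c * (n x - 1)^2 * (n 0 - n x) \<le> wave_K \<sigma> (speed^2) (n x)"
    using taylor.lower_bound_below_root[of "n x - 1" "n 0 - 1"] \<open>n 0 - 1 < r\<close> wave_K_n_nonneg[of 0]
    by simp
  also have "\<dots> \<le> \<epsilon> * 4 * (deriv n x)^2 / 2"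
    unfolding energy_eq_density[symmetric]
    using near[of "n x"] \<open>1 < n x\<close> \<open>n x < n 0\<close> \<open>n 0 - 1 < r\<close> eps_pos
    by (intro divide_right_mono mult_right_mono mult_left_mono) auto
  finally show "c * (n x - 1)^2 * (n 0 - n x) \<le> 2 * \<epsilon> * (deriv n x)^2"
    by simp
qed

lemma density_excess_bounds:
  assumes "k > 0" "A > 0" "\<delta> > 0"
    and amplitude: "n 0 - 1 \<le> A * \<epsilon>"
    and steep: "\<And>x. 0 < x \<Longrightarrow> k / \<epsilon> * (n x - 1)^2 * (n 0 - n x) \<le> (deriv n x)^2"
    and \<xi>: "sqrt (8 / (k * \<delta>)) + sqrt (A / (k * \<delta>^2)) \<le> \<xi>"
  shows "0 < (n \<xi> - 1) / \<epsilon>" and "(n \<xi> - 1) / \<epsilon> \<le> \<delta>"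
proof -
  have "n \<xi> - 1 \<le> \<delta> * \<epsilon>"
  proof (rule decay_below_level[where m = "\<lambda>x. n x - 1" and m' = "deriv n" and \<kappa> = "k / \<epsilon>"
        and \<theta> = "\<delta> * \<epsilon>" and B = "A * \<epsilon>"])
    show "((\<lambda>x. n x - 1) has_real_derivative deriv n x) (at x)" for x
      using n_has_derivative[of x] by (auto intro!: derivative_eq_intros)
    show "n y - 1 < n x - 1" if "0 \<le> x" "x < y" for x y
      using n_decreasing[OF that] by simp
    show "k / \<epsilon> * (n x - 1)^2 * ((n 0 - 1) - (n x - 1)) \<le> (deriv n x)^2" if "0 < x" for x
      using steep[OF that] by simp
    have "k / \<epsilon> * (\<delta> * \<epsilon>) = k * \<delta>" "A * \<epsilon> / (k / \<epsilon> * (\<delta> * \<epsilon>)^2) = A / (k * \<delta>^2)"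
      using eps_pos by (simp_all add: field_simps power2_eq_square)
    with \<xi> show "sqrt (8 / (k / \<epsilon> * (\<delta> * \<epsilon>))) + sqrt (A * \<epsilon> / (k / \<epsilon> * (\<delta> * \<epsilon>)^2)) \<le> \<xi>"
      by simp
  qed (use amplitude eps_pos assms in simp_all)
  moreover have "0 < sqrt (8 / (k * \<delta>))" "0 \<le> sqrt (A / (k * \<delta>^2))"
    using assms by simp_all
  then have "0 < \<xi>"
    using \<xi> by linarith
  then have "1 < n \<xi>"
    by (rule n_gt_1)
  ultimately show "0 < (n \<xi> - 1) / \<epsilon>" "(n \<xi> - 1) / \<epsilon> \<le> \<delta>"
    using eps_pos by (simp_all add: pos_divide_le_eq)
qed

end

lemma solitary_wave_uniform_bounds:
  fixes \<sigma> \<gamma> :: real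
  assumes "\<sigma> \<ge> 0" "\<gamma> > 0"
  obtains \<epsilon>0 A k where "\<epsilon>0 > 0" "A > 0" "k > 0"
    and "\<And>\<epsilon> n u \<phi>. 0 < \<epsilon> \<Longrightarrow> \<epsilon> < \<epsilon>0 \<Longrightarrow> solitary_wave \<sigma> \<gamma> \<epsilon> n u \<phi> \<Longrightarrow>
           n 0 - 1 \<le> A * \<epsilon> \<and> (\<forall>x>0. k / \<epsilon> * (n x - 1)^2 * (n 0 - n x) \<le> (deriv n x)^2)"
proof -
  obtain r c where "0 < r" "r \<le> 1/2" "0 < c" and near: "\<And>w x. \<bar>w - (1 + \<sigma>)\<bar> < r \<Longrightarrow>
      \<bar>x - 1\<bar> < r \<Longrightarrow> wave_K''' \<sigma> w x \<le> - 6 * c \<and> (wave_G' \<sigma> w x)^2 \<le> 4"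
    using wave_bounds_near_sonic_point[OF \<open>\<sigma> \<ge> 0\<close>] by blast
  define \<beta> where "\<beta> = 2 * sqrt (1 + \<sigma>) * \<gamma> + \<gamma>^2"
  have "\<beta> > 0"
    using assms by (auto simp: \<beta>_def intro!: add_nonneg_pos)
  show ?thesis
  proof (rule that[of "min 1 (min (r / \<beta>) (c * r / (2 * \<beta>)))" "\<beta> / c" "c / 2"])
    fix \<epsilon> n u \<phi>
    assume \<epsilon>: "0 < \<epsilon>" "\<epsilon> < min 1 (min (r / \<beta>) (c * r / (2 * \<beta>)))"
      and "solitary_wave \<sigma> \<gamma> \<epsilon> n u \<phi>"
    then interpret solitary_wave_profile \<sigma> \<gamma> \<epsilon> n u \<phi>
      using assms by unfold_locales
    have "\<beta> * \<epsilon> < r" "\<beta> * \<epsilon> < c * r / 2"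
      using \<epsilon> \<open>\<beta> > 0\<close> by (simp_all add: field_simps)
    moreover have "0 < speed^2 - (1 + \<sigma>)" "speed^2 - (1 + \<sigma>) \<le> \<beta> * \<epsilon>"
      using speed_sq_gt speed_sq_excess_le \<epsilon> by (simp_all add: \<beta>_def mult.commute)
    ultimately have "\<And>x. \<bar>x - 1\<bar> < r \<Longrightarrow>
        wave_K''' \<sigma> (speed^2) x \<le> - 6 * c \<and> (wave_G' \<sigma> (speed^2) x)^2 \<le> 4"
      by (intro near) auto
    from amplitude_and_steepness[OF \<open>0 < r\<close> \<open>0 < c\<close> \<open>speed^2 - (1 + \<sigma>) \<le> \<beta> * \<epsilon>\<close> _ _ this]
    show "n 0 - 1 \<le> \<beta> / c * \<epsilon> \<and>
        (\<forall>x>0. c / 2 / \<epsilon> * (n x - 1)^2 * (n 0 - n x) \<le> (deriv n x)^2)"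
      using \<open>\<beta> * \<epsilon> < r\<close> \<open>\<beta> * \<epsilon> < c * r / 2\<close> \<open>r \<le> 1/2\<close> \<open>0 < c\<close> eps_pos
      by (auto simp: field_simps)
  qed (use \<open>0 < c\<close> \<open>\<beta> > 0\<close> \<open>0 < r\<close> in auto)
qed

theorem lemma4p2:
  fixes \<sigma> \<gamma> :: real
  assumes "\<sigma> \<ge> 0" and "\<gamma> > 0"
  shows "\<exists>\<epsilon>0 > 0. \<exists>\<delta>1 > 0. \<forall>\<delta>. 0 < \<delta> \<and> \<delta> < \<delta>1 \<longrightarrow>
           (\<exists>\<xi>\<delta> > 0. \<forall>\<xi> \<epsilon> n u \<phi>. \<xi> \<ge> \<xi>\<delta> \<and> 0 < \<epsilon> \<and> \<epsilon> < \<epsilon>0 \<and>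
               solitary_wave \<sigma> \<gamma> \<epsilon> n u \<phi> \<longrightarrow>
               0 < (n \<xi> - 1) / \<epsilon> \<and> (n \<xi> - 1) / \<epsilon> \<le> \<delta>)"
proof -
  obtain \<epsilon>0 A k where "\<epsilon>0 > 0" "A > 0" "k > 0"
    and bounds: "\<And>\<epsilon> n u \<phi>. 0 < \<epsilon> \<Longrightarrow> \<epsilon> < \<epsilon>0 \<Longrightarrow> solitary_wave \<sigma> \<gamma> \<epsilon> n u \<phi> \<Longrightarrow>

      n 0 - 1 \<le> A * \<epsilon> \<and> (\<forall>x>0. k / \<epsilon> * (n x - 1)^2 * (n 0 - n x) \<le> (deriv n x)^2)"
    using solitary_wave_uniform_bounds[OF assms] by blast
  have "\<exists>\<xi>\<delta> > 0. \<forall>\<xi> \<epsilon> n u \<phi>. \<xi> \<ge> \<xi>\<delta> \<and> 0 < \<epsilon> \<and> \<epsilon> < \<epsilon>0 \<and> solitary_wave \<sigma> \<gamma> \<epsilon> n u \<phi> \<longrightarrow>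
      0 < (n \<xi> - 1) / \<epsilon> \<and> (n \<xi> - 1) / \<epsilon> \<le> \<delta>" if "\<delta> > 0" for \<delta>
  proof (intro exI[of _ "sqrt (8 / (k * \<delta>)) + sqrt (A / (k * \<delta>^2))"] conjI allI impI)
    show "sqrt (8 / (k * \<delta>)) + sqrt (A / (k * \<delta>^2)) > 0"
      using \<open>k > 0\<close> \<open>A > 0\<close> \<open>\<delta> > 0\<close> by (simp add: add_pos_pos)
    fix \<xi> \<epsilon> n u \<phi>
    assume H: "sqrt (8 / (k * \<delta>)) + sqrt (A / (k * \<delta>^2)) \<le> \<xi> \<and> 0 < \<epsilon> \<and> \<epsilon> < \<epsilon>0 \<and>
      solitary_wave \<sigma> \<gamma> \<epsilon> n u \<phi>"
    then interpret solitary_wave_profile \<sigma> \<gamma> \<epsilon> n u \<phi>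
      using assms by unfold_locales auto
    show "0 < (n \<xi> - 1) / \<epsilon>" "(n \<xi> - 1) / \<epsilon> \<le> \<delta>"
      using density_excess_bounds[OF \<open>k > 0\<close> \<open>A > 0\<close> \<open>\<delta> > 0\<close>] bounds[of \<epsilon> n u \<phi>] H by auto
  qed
  with \<open>\<epsilon>0 > 0\<close> show ?thesis
    by (intro exI[of _ \<epsilon>0] exI[of _ 1]) auto
qed

end
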